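(* Let $r>0$, $\sigma\ge0$, $\kappa>0$, $\tau>0$, $p\in[0,1]$ with $\varepsilon=pe^{-\tau}<1$, and $q_c=1-\frac{1}{r}\frac{1}{1-\varepsilon}$. Let $\eta,q\in\mathbb{R}$, $u(\eta,q)=(1-\eta-q,\eta,0,q)$, and let $\mathcal{F}^*_{\eta,q}=\{\phi\in\mathcal{C}^*: H^*(\phi)=H^*(\widehat{u(\eta,q)})\}$ be the level set of $H^*=(H_1^*,H_2^* )$ containing $\widehat{u(\eta,q)}$. Then: (1) $\mathcal{F}^*_{\eta,q}\cap\mathcal{E}^*_0=\{\widehat{u(\eta,q)}\}$. (2) $\mathcal{F}^*_{\eta,q}\cap\mathcal{E}^*_I=\{\widehat{v(\eta,q)}\}$, where $v(\eta,q)=(v_S,v_E(\eta,q),v_I(\eta,q),v_Q(\eta,q))$ with $v_S=\frac{1}{r(1-\varepsilon)}$ and \[ v_E(\eta,q)=\frac{\sigma}{1-\varepsilon+\sigma+\varepsilon\kappa}(q_c-q-\eta)+\eta,\qquad v_I(\eta,q)=\frac{1-\varepsilon}{1-\varepsilon+\sigma+\varepsilon\kappa}(q_c-q-\eta), \] \[ v_Q(\eta,q)=\frac{\varepsilon\kappa}{1-\varepsilon+\sigma+\varepsilon\kappa}(q_c-q-\eta)+q. \]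
   Context: The SEIQ system is \[ \dot S(t)=-rS(t)I(t)+I(t)+r\varepsilon S(t-\sigma-\tau-\kappa)I(t-\sigma-\tau-\kappa),\qquad \dot E(t)=rS(t)I(t)-rS(t-\sigma)I(t-\sigma), \] \[ \dot I(t)=rS(t-\sigma)I(t-\sigma)-I(t)-r\varepsilon S(t-\sigma-\tau)I(t-\sigma-\tau), \] \[ \dot Q(t)=r\varepsilon\big[S(t-\sigma-\tau)I(t-\sigma-\tau)-S(t-\sigma-\tau-\kappa)I(t-\sigma-\tau-\kappa)\big], \] on $\mathcal{C}^*=\{\phi\in C([-\sigma-\tau-\kappa,0],\mathbb{R}^4):\phi_S+\phi_E+\phi_I+\phi_Q\equiv1\}$. For $u\in\mathbb{R}^4$, $\hat u$ is the constant function with value $u$. $\mathcal{E}^*_0=\{\hat\phi\in\mathcal{C}^*\text{ constant}:\phi_I=0\}$ and $\mathcal{E}^*_I=\{\hat\phi\in\mathcal{C}^*\text{ constant}:\phi_S=\frac{1}{r(1-\varepsilon)}\}$. The functionals are $H_1^*(\phi)=1-\phi_S(0)-\phi_E(0)-\phi_I(-\kappa)+\int_{-\kappa}^{0}\phi_I(s)ds-r\int_{-\sigma-\kappa}^{-\sigma}\phi_S(s)\phi_I(s)ds$ and $H_2^*(\phi)=\phi_E(0)-r\int_{-\sigma}^{0}\phi_S(s)\phi_I(s)ds$. *)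

theory Defs
  imports "HOL-Analysis.Analysis"
begin

text \<open>A phase-space element phi = (phi_S, phi_E, phi_I, phi_Q) is given by four real
functions; only their values on the history interval [-sigma-tau-kappa, 0] matter.\<close>

definition hist :: "real \<Rightarrow> real \<Rightarrow> real \<Rightarrow> real set" where
  "hist \<sigma> \<tau> \<kappa> = {-\<sigma>-\<tau>-\<kappa>..0}"

definition inCstar :: "real \<Rightarrow> real \<Rightarrow> real \<Rightarrow>
    (real \<Rightarrow> real) \<Rightarrow> (real \<Rightarrow> real) \<Rightarrow> (real \<Rightarrow> real) \<Rightarrow> (real \<Rightarrow> real) \<Rightarrow> bool" where
  "inCstar \<sigma> \<tau> \<kappa> S E I Q \<longleftrightarrow>
     continuous_on (hist \<sigma> \<tau> \<kappa>) S \<and> continuous_on (hist \<sigma> \<tau> \<kappa>) E \<and>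
     continuous_on (hist \<sigma> \<tau> \<kappa>) I \<and> continuous_on (hist \<sigma> \<tau> \<kappa>) Q \<and>
     (\<forall>s\<in>hist \<sigma> \<tau> \<kappa>. S s + E s + I s + Q s = 1)"

definition H1 :: "real \<Rightarrow> real \<Rightarrow> real \<Rightarrow>
    (real \<Rightarrow> real) \<Rightarrow> (real \<Rightarrow> real) \<Rightarrow> (real \<Rightarrow> real) \<Rightarrow> (real \<Rightarrow> real) \<Rightarrow> real" where
  "H1 r \<sigma> \<kappa> S E I Q = 1 - S 0 - E 0 - I (-\<kappa>) + integral {-\<kappa>..0} I
       - r * integral {-\<sigma>-\<kappa>..-\<sigma>} (\<lambda>s. S s * I s)"

definition H2 :: "real \<Rightarrow> real \<Rightarrow>
    (real \<Rightarrow> real) \<Rightarrow> (real \<Rightarrow> real) \<Rightarrow> (real \<Rightarrow> real) \<Rightarrow> (real \<Rightarrow> real) \<Rightarrow> real" where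
  "H2 r \<sigma> S E I Q = E 0 - r * integral {-\<sigma>..0} (\<lambda>s. S s * I s)"

definition is_const :: "real \<Rightarrow> real \<Rightarrow> real \<Rightarrow>
    (real \<Rightarrow> real) \<Rightarrow> (real \<Rightarrow> real) \<Rightarrow> (real \<Rightarrow> real) \<Rightarrow> (real \<Rightarrow> real) \<Rightarrow> bool" where
  "is_const \<sigma> \<tau> \<kappa> S E I Q \<longleftrightarrow> (\<exists>a b c d. \<forall>s\<in>hist \<sigma> \<tau> \<kappa>.
      S s = a \<and> E s = b \<and> I s = c \<and> Q s = d)"

definition in_level :: "real \<Rightarrow> real \<Rightarrow> real \<Rightarrow> real \<Rightarrow> real \<Rightarrow> real \<Rightarrow>
    (real \<Rightarrow> real) \<Rightarrow> (real \<Rightarrow> real) \<Rightarrow> (real \<Rightarrow> real) \<Rightarrow> (real \<Rightarrow> real) \<Rightarrow> bool" where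
  "in_level r \<sigma> \<tau> \<kappa> \<eta> q S E I Q \<longleftrightarrow> inCstar \<sigma> \<tau> \<kappa> S E I Q \<and>
     H1 r \<sigma> \<kappa> S E I Q = H1 r \<sigma> \<kappa> (\<lambda>_. 1 - \<eta> - q) (\<lambda>_. \<eta>) (\<lambda>_. 0) (\<lambda>_. q) \<and>
     H2 r \<sigma> S E I Q = H2 r \<sigma> (\<lambda>_. 1 - \<eta> - q) (\<lambda>_. \<eta>) (\<lambda>_. 0) (\<lambda>_. q)"

end

theory Submission
  imports Defs
begin

text \<open>On a constant history all integrals in H* are interval lengths times constants, so a
constant function with value (a, b, c, d) lies in the level set of u(\<eta>, q) exactly when
a + b + c + d = 1, H1* = q and H2* = \<eta> hold as scalar equations. Prescribing c = 0 makes
them trivially solvable. Prescribing a = 1/(r(1 - \<epsilon>)) makes them linear: the two H-equations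
express b and d through the incidence r a c, and the mass balance then fixes it.\<close>

lemma integral_const_on:
  fixes f :: "real \<Rightarrow> real"
  assumes "x \<le> y" and "\<forall>s\<in>{x..y}. f s = c"
  shows "integral {x..y} f = (y - x) * c"
proof -
  have "integral {x..y} f = integral {x..y} (\<lambda>_. c)"
    using assms(2) by (intro integral_cong) auto
  also have "\<dots> = (y - x) * c"
    using assms(1) by simp
  finally show ?thesis .
qed

lemma
  assumes "\<sigma> \<ge> 0" "\<tau> \<ge> 0" "\<kappa> \<ge> 0"
    and const: "\<forall>s\<in>hist \<sigma> \<tau> \<kappa>. S s = a \<and> E s = b \<and> I s = c \<and> Q s = d"
  shows H1_const: "H1 r \<sigma> \<kappa> S E I Q = 1 - a - b - c + \<kappa> * c - r * (\<kappa> * (a * c))"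
    and H2_const: "H2 r \<sigma> S E I Q = b - r * (\<sigma> * (a * c))"
proof -
  have "{-\<kappa>..0} \<subseteq> hist \<sigma> \<tau> \<kappa>" "{-\<sigma>-\<kappa>..-\<sigma>} \<subseteq> hist \<sigma> \<tau> \<kappa>" "{-\<sigma>..0} \<subseteq> hist \<sigma> \<tau> \<kappa>"
    using assms(1-3) unfolding hist_def by auto
  then have "integral {-\<kappa>..0} I = \<kappa> * c"
    and "integral {-\<sigma>-\<kappa>..-\<sigma>} (\<lambda>s. S s * I s) = \<kappa> * (a * c)"
    and "integral {-\<sigma>..0} (\<lambda>s. S s * I s) = \<sigma> * (a * c)"
    using assms(1,3) const by (subst integral_const_on; fastforce)+
  moreover have "S 0 = a" "E 0 = b" "I (-\<kappa>) = c"
    using assms unfolding hist_def by auto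
  ultimately show "H1 r \<sigma> \<kappa> S E I Q = 1 - a - b - c + \<kappa> * c - r * (\<kappa> * (a * c))"
    and "H2 r \<sigma> S E I Q = b - r * (\<sigma> * (a * c))"
    unfolding H1_def H2_def by simp_all
qed

lemma inCstar_const_iff:
  assumes "hist \<sigma> \<tau> \<kappa> \<noteq> {}"
    and const: "\<forall>s\<in>hist \<sigma> \<tau> \<kappa>. S s = a \<and> E s = b \<and> I s = c \<and> Q s = d"
  shows "inCstar \<sigma> \<tau> \<kappa> S E I Q \<longleftrightarrow> a + b + c + d = 1"
proof -
  have "continuous_on (hist \<sigma> \<tau> \<kappa>) S" "continuous_on (hist \<sigma> \<tau> \<kappa>) E"
    "continuous_on (hist \<sigma> \<tau> \<kappa>) I" "continuous_on (hist \<sigma> \<tau> \<kappa>) Q"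
    using const by (auto intro: continuous_on_eq[OF continuous_on_const])
  then show ?thesis
    using assms unfolding inCstar_def by auto
qed

lemma in_level_const_iff:
  assumes "\<sigma> \<ge> 0" "\<tau> \<ge> 0" "\<kappa> \<ge> 0"
    and const: "\<forall>s\<in>hist \<sigma> \<tau> \<kappa>. S s = a \<and> E s = b \<and> I s = c \<and> Q s = d"
  shows "in_level r \<sigma> \<tau> \<kappa> \<eta> q S E I Q \<longleftrightarrow>
    a + b + c + d = 1 \<and> 1 - a - b - c + \<kappa> * c - r * (\<kappa> * (a * c)) = q \<and> b - r * (\<sigma> * (a * c)) = \<eta>"
proof -
  have "hist \<sigma> \<tau> \<kappa> \<noteq> {}"
    using assms(1-3) unfolding hist_def by auto
  note inCstar_const_iff[OF this const]
  moreover have "H1 r \<sigma> \<kappa> (\<lambda>_. 1 - \<eta> - q) (\<lambda>_. \<eta>) (\<lambda>_. 0) (\<lambda>_. q) = q"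
    and "H2 r \<sigma> (\<lambda>_. 1 - \<eta> - q) (\<lambda>_. \<eta>) (\<lambda>_. 0) (\<lambda>_. q) = \<eta>"
    using H1_const[OF assms(1-3), of "\<lambda>_. 1 - \<eta> - q" "1 - \<eta> - q" "\<lambda>_. \<eta>" \<eta> "\<lambda>_. 0" 0 "\<lambda>_. q" q]
      H2_const[OF assms(1-3), of "\<lambda>_. 1 - \<eta> - q" "1 - \<eta> - q" "\<lambda>_. \<eta>" \<eta> "\<lambda>_. 0" 0 "\<lambda>_. q" q]
    by simp_all
  ultimately show ?thesis
    unfolding in_level_def H1_const[OF assms] H2_const[OF assms]
    by simp
qed

lemma constant_level_set_point_iff:
  assumes "\<sigma> \<ge> 0" "\<tau> \<ge> 0" "\<kappa> \<ge> 0"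
    and point: "\<And>a b c d. (a + b + c + d = 1 \<and> 1 - a - b - c + \<kappa> * c - r * (\<kappa> * (a * c)) = q \<and>
        b - r * (\<sigma> * (a * c)) = \<eta> \<and> P a b c d) \<longleftrightarrow> a = a\<^sub>0 \<and> b = b\<^sub>0 \<and> c = c\<^sub>0 \<and> d = d\<^sub>0"
  shows "(in_level r \<sigma> \<tau> \<kappa> \<eta> q S E I Q \<and> is_const \<sigma> \<tau> \<kappa> S E I Q \<and>
      (\<forall>s\<in>hist \<sigma> \<tau> \<kappa>. P (S s) (E s) (I s) (Q s)))
    \<longleftrightarrow> (\<forall>s\<in>hist \<sigma> \<tau> \<kappa>. S s = a\<^sub>0 \<and> E s = b\<^sub>0 \<and> I s = c\<^sub>0 \<and> Q s = d\<^sub>0)"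
proof -
  have "0 \<in> hist \<sigma> \<tau> \<kappa>"
    using assms(1-3) unfolding hist_def by auto
  show ?thesis
  proof
    assume lhs: "in_level r \<sigma> \<tau> \<kappa> \<eta> q S E I Q \<and> is_const \<sigma> \<tau> \<kappa> S E I Q \<and>
      (\<forall>s\<in>hist \<sigma> \<tau> \<kappa>. P (S s) (E s) (I s) (Q s))"
    then obtain a b c d where const: "\<forall>s\<in>hist \<sigma> \<tau> \<kappa>. S s = a \<and> E s = b \<and> I s = c \<and> Q s = d"
      unfolding is_const_def by blast
    with lhs \<open>0 \<in> hist \<sigma> \<tau> \<kappa>\<close> have "P a b c d"
      by metis
    with lhs have "a = a\<^sub>0 \<and> b = b\<^sub>0 \<and> c = c\<^sub>0 \<and> d = d\<^sub>0"
      using point in_level_const_iff[OF assms(1-3) const] by blast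
    with const show "\<forall>s\<in>hist \<sigma> \<tau> \<kappa>. S s = a\<^sub>0 \<and> E s = b\<^sub>0 \<and> I s = c\<^sub>0 \<and> Q s = d\<^sub>0"
      by simp
  next
    assume const: "\<forall>s\<in>hist \<sigma> \<tau> \<kappa>. S s = a\<^sub>0 \<and> E s = b\<^sub>0 \<and> I s = c\<^sub>0 \<and> Q s = d\<^sub>0"
    then show "in_level r \<sigma> \<tau> \<kappa> \<eta> q S E I Q \<and> is_const \<sigma> \<tau> \<kappa> S E I Q \<and>
      (\<forall>s\<in>hist \<sigma> \<tau> \<kappa>. P (S s) (E s) (I s) (Q s))"
      using point[of a\<^sub>0 b\<^sub>0 c\<^sub>0 d\<^sub>0] in_level_const_iff[OF assms(1-3) const]
      unfolding is_const_def by auto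
  qed
qed

lemma endemic_equilibrium_equations_iff:
  fixes r \<sigma> \<kappa> \<epsilon> a b c d q \<eta> :: real
  defines "D \<equiv> 1 - \<epsilon> + \<sigma> + \<epsilon> * \<kappa>"
  assumes ra: "r * a * (1 - \<epsilon>) = 1" and "D \<noteq> 0"
  shows "(a + b + c + d = 1 \<and> 1 - a - b - c + \<kappa> * c - r * (\<kappa> * (a * c)) = q \<and>
      b - r * (\<sigma> * (a * c)) = \<eta>)
    \<longleftrightarrow> b = \<sigma> / D * (1 - a - q - \<eta>) + \<eta> \<and> c = (1 - \<epsilon>) / D * (1 - a - q - \<eta>) \<and>
      d = (\<epsilon> * \<kappa>) / D * (1 - a - q - \<eta>) + q"
proof -
  define x where "x = r * a * c"
  define y where "y = (1 - a - q - \<eta>) / D"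
  have "1 - \<epsilon> \<noteq> 0"
    using ra by auto
  have c: "c = (1 - \<epsilon>) * x"
    using ra unfolding x_def by (metis mult.commute mult.left_commute mult_1_right)
  have rac: "r * (z * (a * c)) = z * x" for z
    unfolding x_def by (simp add: ac_simps)
  have "(a + b + c + d = 1 \<and> 1 - a - b - c + \<kappa> * c - r * (\<kappa> * (a * c)) = q \<and>
      b - r * (\<sigma> * (a * c)) = \<eta>)
    \<longleftrightarrow> (a + b + c + d = 1 \<and> d = q + \<epsilon> * \<kappa> * x \<and> b = \<eta> + \<sigma> * x)"
    unfolding rac by (auto simp: algebra_simps c)
  also have "\<dots> \<longleftrightarrow> (x * D = 1 - a - q - \<eta> \<and> d = q + \<epsilon> * \<kappa> * x \<and> b = \<eta> + \<sigma> * x)"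
    unfolding D_def by (auto simp: algebra_simps c)
  also have "\<dots> \<longleftrightarrow> (x = y \<and> d = q + \<epsilon> * \<kappa> * x \<and> b = \<eta> + \<sigma> * x)"
    using \<open>D \<noteq> 0\<close> unfolding y_def by (auto simp: field_simps)
  also have "\<dots> \<longleftrightarrow> b = \<sigma> * y + \<eta> \<and> c = (1 - \<epsilon>) * y \<and> d = (\<epsilon> * \<kappa>) * y + q"
    using \<open>1 - \<epsilon> \<noteq> 0\<close> by (auto simp: c)
  finally show ?thesis
    unfolding y_def by simp
qed

theorem theorem12:
  fixes r \<sigma> \<kappa> \<tau> p \<epsilon> qc \<eta> q :: real
  assumes "r > 0" and "\<sigma> \<ge> 0" and "\<kappa> > 0" and "\<tau> > 0"
    and "0 \<le> p" and "p \<le> 1"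
    and eps: "\<epsilon> = p * exp (- \<tau>)" and "\<epsilon> < 1"
    and qc: "qc = 1 - (1 / r) * (1 / (1 - \<epsilon>))"
  shows
    "(\<forall>S E I Q. (in_level r \<sigma> \<tau> \<kappa> \<eta> q S E I Q \<and>
        is_const \<sigma> \<tau> \<kappa> S E I Q \<and> (\<forall>s\<in>hist \<sigma> \<tau> \<kappa>. I s = 0))
      \<longleftrightarrow> (\<forall>s\<in>hist \<sigma> \<tau> \<kappa>. S s = 1 - \<eta> - q \<and> E s = \<eta> \<and> I s = 0 \<and> Q s = q))
   \<and>
    (\<forall>S E I Q. (in_level r \<sigma> \<tau> \<kappa> \<eta> q S E I Q \<and>
        is_const \<sigma> \<tau> \<kappa> S E I Q \<and> (\<forall>s\<in>hist \<sigma> \<tau> \<kappa>. S s = 1 / (r * (1 - \<epsilon>))))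
      \<longleftrightarrow> (\<forall>s\<in>hist \<sigma> \<tau> \<kappa>.
             S s = 1 / (r * (1 - \<epsilon>)) \<and>
             E s = \<sigma> / (1 - \<epsilon> + \<sigma> + \<epsilon> * \<kappa>) * (qc - q - \<eta>) + \<eta> \<and>
             I s = (1 - \<epsilon>) / (1 - \<epsilon> + \<sigma> + \<epsilon> * \<kappa>) * (qc - q - \<eta>) \<and>
             Q s = (\<epsilon> * \<kappa>) / (1 - \<epsilon> + \<sigma> + \<epsilon> * \<kappa>) * (qc - q - \<eta>) + q))"
proof -
  have hist: "\<sigma> \<ge> 0" "\<tau> \<ge> 0" "\<kappa> \<ge> 0"
    using assms by simp_all
  have disease_free: "(a + b + c + d = 1 \<and> 1 - a - b - c + \<kappa> * c - r * (\<kappa> * (a * c)) = q \<and>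
      b - r * (\<sigma> * (a * c)) = \<eta> \<and> c = 0) \<longleftrightarrow> a = 1 - \<eta> - q \<and> b = \<eta> \<and> c = 0 \<and> d = q"
    for a b c d :: real
    by auto
  let ?a = "1 / (r * (1 - \<epsilon>))"
  let ?D = "1 - \<epsilon> + \<sigma> + \<epsilon> * \<kappa>"
  have "r * ?a * (1 - \<epsilon>) = 1"
    using assms by simp
  moreover have "?D \<noteq> 0"
  proof -
    have "0 \<le> \<epsilon> * \<kappa>"
      using eps assms(3,5) by simp
    then show ?thesis
      using assms(2,8) by linarith
  qed
  moreover have "qc = 1 - ?a"
    using qc by simp
  ultimately have endemic: "(a + b + c + d = 1 \<and> 1 - a - b - c + \<kappa> * c - r * (\<kappa> * (a * c)) = q \<and>
      b - r * (\<sigma> * (a * c)) = \<eta> \<and> a = ?a) \<longleftrightarrow>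
      a = ?a \<and> b = \<sigma> / ?D * (qc - q - \<eta>) + \<eta> \<and> c = (1 - \<epsilon>) / ?D * (qc - q - \<eta>) \<and>
      d = (\<epsilon> * \<kappa>) / ?D * (qc - q - \<eta>) + q"
    for a b c d :: real
    using endemic_equilibrium_equations_iff[of r ?a \<epsilon> \<sigma> \<kappa> b c d q \<eta>] by blast
  show ?thesis
    using constant_level_set_point_iff[OF hist disease_free]
      constant_level_set_point_iff[OF hist endemic] by blast
qed

end
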